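(* Let $\mathbb{D}^n$ be the unit polydisk in $\mathbb{C}^n$, let $\mu:\mathbb{D}^n\to(0,\infty)$ be a weight, let $\psi\in H(\mathbb{D}^n)$ and let $\varphi=(\varphi_1,\dots,\varphi_n)$ be a holomorphic self-map of $\mathbb{D}^n$. Let $W_{\psi,\varphi}f=\psi\,(f\circ\varphi)$. The following are equivalent: (a) $W_{\psi,\varphi}:\mathcal{B}(\mathbb{D}^n)\to H^\infty_\mu(\mathbb{D}^n)$ is bounded; (b) $W_{\psi,\varphi}:\mathcal{B}_{0*}(\mathbb{D}^n)\to H^\infty_\mu(\mathbb{D}^n)$ is bounded; (c) $\psi\in H^\infty_\mu(\mathbb{D}^n)$ and $$\vartheta_\mu(\psi,\varphi)=\sup_{z\in\mathbb{D}^n}\tfrac12\mu(z)|\psi(z)|\sum_{j=1}^n\log\frac{1+|\varphi_j(z)|}{1-|\varphi_j(z)|}$$ is finite.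
   Context: $H(\mathbb{D}^n)$ denotes holomorphic functions $\mathbb{D}^n\to\mathbb{C}$. A weight is a continuous strictly positive function $\mu$; $H^\infty_\mu(\mathbb{D}^n)=\{f\in H(\mathbb{D}^n):\|f\|_{H^\infty_\mu}=\sup_{z}\mu(z)|f(z)|<\infty\}$. The Bergman metric of $\mathbb{D}^n$ is $H_z(u,\bar v)=\sum_{j=1}^n\frac{u_j\bar v_j}{(1-|z_j|^2)^2}$. For $f\in H(\mathbb{D}^n)$, $Q_f(z)=\sup_{u\ne 0}\frac{|\sum_k \partial_k f(z)u_k|}{H_z(u,\bar u)^{1/2}}$, $\beta_f=\sup_z Q_f(z)$, $\mathcal{B}(\mathbb{D}^n)=\{f:\beta_f<\infty\}$ with norm $\|f\|_{\mathcal{B}}=|f(0)|+\beta_f$, and $\mathcal{B}_{0*}(\mathbb{D}^n)=\{f\in\mathcal{B}(\mathbb{D}^n):\lim_{z\to\partial^*\mathbb{D}^n}Q_f(z)=0\}$ with the same norm, where $\partial^*\mathbb{D}^n$ is the distinguished boundary (the torus $\{|z_1|=\dots=|z_n|=1\}$). *)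

theory Defs
  imports "HOL-Analysis.Analysis"
begin

definition polydisc :: "(complex ^ 'n::finite) set" where
  "polydisc = {z. \<forall>j. norm (z $ j) < 1}"

definition torus :: "(complex ^ 'n::finite) set" where
  "torus = {z. \<forall>j. norm (z $ j) = 1}"

definition cscale :: "complex \<Rightarrow> complex ^ 'n::finite \<Rightarrow> complex ^ 'n" where
  "cscale c v = (\<chi> j. c * v $ j)"

definition holo_on :: "(complex ^ 'n::finite \<Rightarrow> complex) \<Rightarrow> (complex ^ 'n) set \<Rightarrow> bool" where
  "holo_on f S \<longleftrightarrow> (\<forall>z\<in>S. \<exists>f'. (f has_derivative f') (at z) \<and>
                                 (\<forall>v. f' (cscale \<i> v) = \<i> * f' v))"

definition holo_self_map :: "(complex ^ 'n::finite \<Rightarrow> complex ^ 'n) \<Rightarrow> bool" where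
  "holo_self_map phi \<longleftrightarrow> (\<forall>j. holo_on (\<lambda>z. phi z $ j) polydisc) \<and> phi ` polydisc \<subseteq> polydisc"

definition weight :: "(complex ^ 'n::finite \<Rightarrow> real) \<Rightarrow> bool" where
  "weight mu \<longleftrightarrow> continuous_on polydisc mu \<and> (\<forall>z\<in>polydisc. mu z > 0)"

definition pderiv_c :: "(complex ^ 'n::finite \<Rightarrow> complex) \<Rightarrow> 'n \<Rightarrow> complex ^ 'n \<Rightarrow> complex" where
  "pderiv_c f k z = deriv (\<lambda>w. f (\<chi> j. if j = k then w else z $ j)) (z $ k)"

definition bergman :: "complex ^ 'n::finite \<Rightarrow> complex ^ 'n \<Rightarrow> real" where
  "bergman z u = (\<Sum>j\<in>UNIV. (norm (u $ j))\<^sup>2 / (1 - (norm (z $ j))\<^sup>2)\<^sup>2)"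

definition Qf :: "(complex ^ 'n::finite \<Rightarrow> complex) \<Rightarrow> complex ^ 'n \<Rightarrow> real" where
  "Qf f z = (SUP u\<in>{u. u \<noteq> 0}. norm (\<Sum>k\<in>UNIV. pderiv_c f k z * u $ k) / sqrt (bergman z u))"

definition bloch_seminorm :: "(complex ^ 'n::finite \<Rightarrow> complex) \<Rightarrow> real" where
  "bloch_seminorm f = (SUP z\<in>polydisc. Qf f z)"

definition bloch :: "(complex ^ 'n::finite \<Rightarrow> complex) set" where
  "bloch = {f. holo_on f polydisc \<and> bdd_above (Qf f ` polydisc)}"

definition bloch_norm :: "(complex ^ 'n::finite \<Rightarrow> complex) \<Rightarrow> real" where
  "bloch_norm f = norm (f 0) + bloch_seminorm f"

definition bloch0star :: "(complex ^ 'n::finite \<Rightarrow> complex) set" where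
  "bloch0star = {f \<in> bloch. \<forall>\<zeta>\<in>torus. ((Qf f) \<longlongrightarrow> 0) (at \<zeta> within polydisc)}"

definition Hmu :: "(complex ^ 'n::finite \<Rightarrow> real) \<Rightarrow> (complex ^ 'n \<Rightarrow> complex) set" where
  "Hmu mu = {f. holo_on f polydisc \<and> bdd_above ((\<lambda>z. mu z * norm (f z)) ` polydisc)}"

definition Hmu_norm :: "(complex ^ 'n::finite \<Rightarrow> real) \<Rightarrow> (complex ^ 'n \<Rightarrow> complex) \<Rightarrow> real" where
  "Hmu_norm mu f = (SUP z\<in>polydisc. mu z * norm (f z))"

definition wcomp :: "(complex ^ 'n::finite \<Rightarrow> complex) \<Rightarrow> (complex ^ 'n \<Rightarrow> complex ^ 'n)
                     \<Rightarrow> (complex ^ 'n \<Rightarrow> complex) \<Rightarrow> (complex ^ 'n \<Rightarrow> complex)" where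
  "wcomp psi phi f = (\<lambda>z. psi z * f (phi z))"

definition bounded_op :: "('a \<Rightarrow> 'b) \<Rightarrow> 'a set \<Rightarrow> ('a \<Rightarrow> real) \<Rightarrow> 'b set \<Rightarrow> ('b \<Rightarrow> real) \<Rightarrow> bool" where
  "bounded_op T X nX Y nY \<longleftrightarrow> (\<forall>x\<in>X. T x \<in> Y) \<and> (\<exists>C. \<forall>x\<in>X. nY (T x) \<le> C * nX x)"

definition theta_set :: "(complex ^ 'n::finite \<Rightarrow> real) \<Rightarrow> (complex ^ 'n \<Rightarrow> complex)
                         \<Rightarrow> (complex ^ 'n \<Rightarrow> complex ^ 'n) \<Rightarrow> real set" where
  "theta_set mu psi phi = (\<lambda>z. 1/2 * mu z * norm (psi z) *
      (\<Sum>j\<in>UNIV. ln ((1 + norm (phi z $ j)) / (1 - norm (phi z $ j))))) ` polydisc"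

end

theory Submission
  imports Defs
begin

text \<open>
  \<open>(c) \<Longrightarrow> (a)\<close>: by the definition of \<open>Q\<^sub>f\<close>, the derivative of a Bloch function at \<open>z\<close> in
  direction \<open>v\<close> is at most \<open>\<beta>\<^sub>f \<Sum>\<^sub>j |v\<^sub>j| / (1 - |z\<^sub>j|\<^sup>2)\<close>. Integrating along the segment
  from \<open>0\<close> to \<open>w\<close> gives \<open>|f(w)| \<le> \<parallel>f\<parallel>\<^sub>\<B> (1 + \<Sum>\<^sub>j artanh |w\<^sub>j|)\<close>, and since
  \<open>artanh r = \<onehalf> log ((1 + r) / (1 - r))\<close>, the operator norm is at most
  \<open>\<parallel>\<psi>\<parallel>\<^sub>\<mu> + \<theta>\<^sub>\<mu>(\<psi>, \<phi>)\<close>.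

  \<open>(b) \<Longrightarrow> (c)\<close>: the functions \<open>f\<^sub>c(z) = \<Sum>\<^sub>j log (1 / (1 - c\<^sub>j z\<^sub>j))\<close> with \<open>c \<in> \<bbbD>\<^sup>n\<close>
  satisfy \<open>Q\<^sub>f\<^sub>c \<le> 2n\<close> and \<open>Q\<^sub>f\<^sub>c(z) \<le> \<Sum>\<^sub>j (1 - |z\<^sub>j|\<^sup>2) / (1 - |c\<^sub>j|)\<close>, which vanishes on the
  torus; so they lie in \<open>\<B>\<^sub>0\<^sub>*\<close> with norm at most \<open>2n\<close>. For \<open>c = conj (\<phi>(z))\<close> the value
  \<open>f\<^sub>c(\<phi>(z)) = \<Sum>\<^sub>j log (1 / (1 - |\<phi>\<^sub>j(z)|\<^sup>2))\<close> is at least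
  \<open>2 \<Sum>\<^sub>j artanh |\<phi>\<^sub>j(z)| - 2n log 2\<close>, so boundedness of the operator bounds \<open>\<theta>\<^sub>\<mu>\<close>;
  testing it on the constant \<open>1\<close> gives \<open>\<psi> \<in> H\<^sup>\<infinity>\<^sub>\<mu>\<close>.

  \<open>(a) \<Longrightarrow> (b)\<close> holds because \<open>\<B>\<^sub>0\<^sub>* \<subseteq> \<B>\<close>.
\<close>

section \<open>Complex differentiability in several variables\<close>

lemma cscale_eq_scalar_mult: "cscale c v = c *s v"
  by (simp add: cscale_def vector_scalar_mult_def)

lemma norm_axis: "norm (axis k x :: 'a::real_normed_vector ^ 'n::finite) = norm x"
proof -
  have e: "(\<lambda>i. (norm (axis k x $ i))\<^sup>2) = (\<lambda>i. if i = k then (norm x)\<^sup>2 else 0)"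
    by (auto simp: axis_def)
  show ?thesis
    unfolding norm_vec_def L2_set_def e by simp
qed

lemma bounded_linear_axis: "bounded_linear (axis k :: 'a::real_normed_vector \<Rightarrow> 'a ^ 'n::finite)"
proof (rule bounded_linear_intro[where K = 1])
  show "axis k (x + y) = axis k x + axis k y" for x y :: 'a
    by (simp add: vec_eq_iff axis_def)
  show "axis k (r *\<^sub>R x) = r *\<^sub>R axis k x" for r and x :: 'a
    by (simp add: vec_eq_iff axis_def)
  show "norm (axis k x :: 'a ^ 'n) \<le> norm x * 1" for x :: 'a
    by (simp add: norm_axis)
qed

lemma has_derivative_vec_lambda:
  fixes F :: "'a::real_normed_vector \<Rightarrow> 'b::real_normed_vector ^ 'n::finite"
  assumes "\<And>j. ((\<lambda>x. F x $ j) has_derivative D j) (at z within S)"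
  shows "(F has_derivative (\<lambda>h. \<chi> j. D j h)) (at z within S)"
proof -
  have sum_axis: "(\<Sum>j\<in>UNIV. axis j (v $ j)) = v" for v :: "'b ^ 'n"
    by (simp add: vec_eq_iff axis_def if_distrib cong: if_cong)
  have "((\<lambda>x. \<Sum>j\<in>UNIV. axis j (F x $ j)) has_derivative (\<lambda>h. \<Sum>j\<in>UNIV. axis j (D j h))) (at z within S)"
    by (intro has_derivative_sum bounded_linear.has_derivative[OF bounded_linear_axis] assms)
  moreover have "(\<Sum>j\<in>UNIV. axis j (D j h)) = (\<chi> j. D j h)" for h
    using sum_axis[of "\<chi> j. D j h"] by simp
  ultimately show ?thesis
    by (simp add: sum_axis)
qed

lemma cscale_homogeneous:
  assumes "bounded_linear L" "\<And>v. L (cscale \<i> v) = \<i> * L v"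
  shows "L (cscale c v) = c * L v"
proof -
  interpret bounded_linear L by fact
  have "cscale c v = Re c *\<^sub>R v + Im c *\<^sub>R cscale \<i> v"
    by (simp add: cscale_def vec_eq_iff complex_eq_iff)
  then have "L (cscale c v) = Re c *\<^sub>R L v + Im c *\<^sub>R (\<i> * L v)"
    by (simp add: add scaleR assms(2))
  also have "\<dots> = c * L v"
    by (simp add: scaleR_conv_of_real complex_eq_iff algebra_simps)
  finally show ?thesis .
qed

lemma has_derivative_coordinate_slice:
  "((\<lambda>w. \<chi> j. if j = k then w else z $ j) has_derivative axis k) (at w0 within S)"
proof -
  have "(\<lambda>w. \<chi> j. if j = k then w else z $ j) = (\<lambda>w. z + axis k (w - z $ k))"
    by (auto simp: vec_eq_iff axis_def)
  moreover have "((\<lambda>w. z + axis k (w - z $ k)) has_derivative axis k) (at w0 within S)"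
    by (rule derivative_eq_intros bounded_linear.has_derivative[OF bounded_linear_axis] | simp)+
  ultimately show ?thesis by simp
qed

lemma pderiv_c_eq:
  assumes "(f has_derivative L) (at z)" "\<And>v. L (cscale \<i> v) = \<i> * L v"
  shows "pderiv_c f k z = L (axis k 1)"
proof -
  have L: "bounded_linear L" using assms(1) by (rule has_derivative_bounded_linear)
  have "(\<chi> j. if j = k then z $ k else z $ j) = z" by (simp add: vec_eq_iff)
  then have "((\<lambda>w. f (\<chi> j. if j = k then w else z $ j)) has_derivative (\<lambda>h. L (axis k h))) (at (z $ k))"
    using has_derivative_compose[OF has_derivative_coordinate_slice, of _ L] assms(1) by simp
  moreover have "(\<lambda>h. L (axis k h)) = (*) (L (axis k 1))"
  proof
    fix h
    have "axis k h = cscale h (axis k 1)" by (simp add: cscale_def axis_def vec_eq_iff)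
    then show "L (axis k h) = L (axis k 1) * h"
      using cscale_homogeneous[of L, OF L assms(2), of h "axis k 1"] by (simp add: mult.commute)
  qed
  ultimately have "((\<lambda>w. f (\<chi> j. if j = k then w else z $ j)) has_field_derivative L (axis k 1)) (at (z $ k))"
    by (simp add: has_field_derivative_def)
  then show ?thesis unfolding pderiv_c_def by (rule DERIV_imp_deriv)
qed

lemma has_derivative_eq_sum_pderiv_c:
  assumes "(f has_derivative L) (at z)" "\<And>v. L (cscale \<i> v) = \<i> * L v"
  shows "L v = (\<Sum>k\<in>UNIV. pderiv_c f k z * v $ k)"
proof -
  have L: "bounded_linear L" using assms(1) by (rule has_derivative_bounded_linear)
  have "L v = L (\<Sum>k\<in>UNIV. cscale (v $ k) (axis k 1))"
    by (simp add: cscale_eq_scalar_mult basis_expansion)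
  also have "\<dots> = (\<Sum>k\<in>UNIV. L (cscale (v $ k) (axis k 1)))"
    by (rule linear_sum[OF bounded_linear.linear[OF L]])
  also have "\<dots> = (\<Sum>k\<in>UNIV. pderiv_c f k z * v $ k)"
    using cscale_homogeneous[of L, OF L assms(2)] pderiv_c_eq[of f L z, OF assms] by (simp add: mult.commute)
  finally show ?thesis .
qed

lemma holo_on_has_derivative:
  assumes "holo_on f S" "z \<in> S"
  shows "(f has_derivative (\<lambda>v. \<Sum>k\<in>UNIV. pderiv_c f k z * v $ k)) (at z)"
proof -
  obtain L where "(f has_derivative L) (at z)" "\<And>v. L (cscale \<i> v) = \<i> * L v"
    using assms unfolding holo_on_def by blast
  moreover from this have "L = (\<lambda>v. \<Sum>k\<in>UNIV. pderiv_c f k z * v $ k)"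
    by (intro ext has_derivative_eq_sum_pderiv_c)
  ultimately show ?thesis by simp
qed

lemma holo_on_const: "holo_on (\<lambda>z. c) S"
  unfolding holo_on_def by (auto intro!: exI[of _ "\<lambda>h. 0"])

lemma holo_on_mult:
  assumes "holo_on f S" "holo_on g S"
  shows "holo_on (\<lambda>z. f z * g z) S"
  unfolding holo_on_def
proof
  fix z assume "z \<in> S"
  then obtain f' g' where
      f': "(f has_derivative f') (at z)" "\<forall>v. f' (cscale \<i> v) = \<i> * f' v" and
      g': "(g has_derivative g') (at z)" "\<forall>v. g' (cscale \<i> v) = \<i> * g' v"
    using assms unfolding holo_on_def by meson
  show "\<exists>d. ((\<lambda>z. f z * g z) has_derivative d) (at z) \<and> (\<forall>v. d (cscale \<i> v) = \<i> * d v)"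
    using has_derivative_mult[OF f'(1) g'(1)] f'(2) g'(2)
    by (intro exI[of _ "\<lambda>h. f z * g' h + f' h * g z"]) (auto simp: algebra_simps)
qed

lemma holo_on_compose:
  fixes phi :: "complex ^ 'm::finite \<Rightarrow> complex ^ 'n::finite"
  assumes phi: "\<And>j. holo_on (\<lambda>z. phi z $ j) S" and "phi ` S \<subseteq> T" and f: "holo_on f T"
  shows "holo_on (\<lambda>z. f (phi z)) S"
  unfolding holo_on_def
proof
  fix z assume z: "z \<in> S"
  have "\<forall>j. \<exists>d. ((\<lambda>z. phi z $ j) has_derivative d) (at z) \<and> (\<forall>v. d (cscale \<i> v) = \<i> * d v)"
    using phi z unfolding holo_on_def by blast
  then obtain D where D: "\<And>j. ((\<lambda>z. phi z $ j) has_derivative D j) (at z)"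
      "\<And>j v. D j (cscale \<i> v) = \<i> * D j v"
    by metis
  have "phi z \<in> T" using \<open>phi ` S \<subseteq> T\<close> z by blast
  then obtain f' where f': "(f has_derivative f') (at (phi z))" "\<forall>v. f' (cscale \<i> v) = \<i> * f' v"
    using f unfolding holo_on_def by blast
  have "(\<chi> j. D j (cscale \<i> v)) = cscale \<i> (\<chi> j. D j v)" for v
    using D(2) by (simp add: vec_eq_iff cscale_def)
  then show "\<exists>d. ((\<lambda>z. f (phi z)) has_derivative d) (at z) \<and> (\<forall>v. d (cscale \<i> v) = \<i> * d v)"
    using has_derivative_compose[OF has_derivative_vec_lambda[OF D(1)] f'(1)] f'(2)
    by (intro exI[of _ "\<lambda>h. f' (\<chi> j. D j h)"]) auto
qed

lemma holo_on_wcomp: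
  assumes "holo_on psi polydisc" "holo_self_map phi" "holo_on f polydisc"
  shows "holo_on (wcomp psi phi f) polydisc"
proof -
  have "holo_on (\<lambda>z. f (phi z)) polydisc"
    by (rule holo_on_compose[of phi]) (use assms(2,3) in \<open>auto simp: holo_self_map_def\<close>)
  then show ?thesis
    unfolding wcomp_def by (rule holo_on_mult[OF assms(1)])
qed

section \<open>The polydisc and the Bergman metric\<close>

lemma polydisc_norm_less_1: "z \<in> polydisc \<Longrightarrow> norm (z $ j) < 1"
  by (simp add: polydisc_def)

lemma polydisc_one_minus_norm_sq_pos: "z \<in> polydisc \<Longrightarrow> 0 < 1 - (norm (z $ j))\<^sup>2"
  by (simp add: polydisc_def abs_square_less_1)

lemma zero_in_polydisc: "0 \<in> polydisc"
  by (simp add: polydisc_def)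

lemma scaleR_in_polydisc:
  assumes "w \<in> polydisc" "\<bar>t\<bar> \<le> 1"
  shows "t *\<^sub>R w \<in> polydisc"
proof -
  have "\<bar>t\<bar> * norm (w $ j) < 1" for j
  proof -
    have "\<bar>t\<bar> * norm (w $ j) \<le> norm (w $ j)" using assms(2) by (simp add: mult_left_le_one_le)
    also have "\<dots> < 1" using assms(1) by (rule polydisc_norm_less_1)
    finally show ?thesis .
  qed
  then show ?thesis by (simp add: polydisc_def)
qed

lemma self_map_in_polydisc: "holo_self_map phi \<Longrightarrow> z \<in> polydisc \<Longrightarrow> phi z \<in> polydisc"
  unfolding holo_self_map_def by blast

lemma norm_component_le_sqrt_bergman:
  assumes "z \<in> polydisc"
  shows "norm (u $ k) \<le> (1 - (norm (z $ k))\<^sup>2) * sqrt (bergman z u)"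
proof -
  have d: "0 < 1 - (norm (z $ k))\<^sup>2" using assms by (rule polydisc_one_minus_norm_sq_pos)
  have "(norm (u $ k))\<^sup>2 / (1 - (norm (z $ k))\<^sup>2)\<^sup>2 \<le> bergman z u"
    unfolding bergman_def by (rule member_le_sum) auto
  then have "norm (u $ k) / (1 - (norm (z $ k))\<^sup>2) \<le> sqrt (bergman z u)"
    using d by (simp add: real_le_rsqrt power_divide)
  then show ?thesis using d by (simp add: divide_le_eq mult.commute)
qed

lemma bergman_pos:
  assumes "z \<in> polydisc" "u \<noteq> 0"
  shows "0 < bergman z u"
proof -
  obtain k where "u $ k \<noteq> 0" using assms(2) by (auto simp: vec_eq_iff)
  then have "0 < norm (u $ k)" by simp
  also have "\<dots> \<le> (1 - (norm (z $ k))\<^sup>2) * sqrt (bergman z u)"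
    using assms(1) by (rule norm_component_le_sqrt_bergman)
  finally have "0 < sqrt (bergman z u)"
    by (rule zero_less_mult_pos[OF _ polydisc_one_minus_norm_sq_pos[OF assms(1)]])
  then show ?thesis by simp
qed

lemma sqrt_bergman_le_sum:
  assumes "z \<in> polydisc"
  shows "sqrt (bergman z u) \<le> (\<Sum>k\<in>UNIV. norm (u $ k) / (1 - (norm (z $ k))\<^sup>2))"
proof -
  have "sqrt (bergman z u) = L2_set (\<lambda>k. norm (u $ k) / (1 - (norm (z $ k))\<^sup>2)) UNIV"
    unfolding bergman_def L2_set_def by (simp add: power_divide)
  also have "\<dots> \<le> (\<Sum>k\<in>UNIV. norm (u $ k) / (1 - (norm (z $ k))\<^sup>2))"
    using polydisc_one_minus_norm_sq_pos[OF assms] by (intro L2_set_le_sum) (simp add: less_imp_le)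
  finally show ?thesis .
qed

lemma Qf_quotient_le:
  assumes "z \<in> polydisc" "u \<noteq> 0"
  shows "norm (\<Sum>k\<in>UNIV. a k * u $ k) / sqrt (bergman z u)
           \<le> (\<Sum>k\<in>UNIV. norm (a k) * (1 - (norm (z $ k))\<^sup>2))"
proof -
  define B where "B = sqrt (bergman z u)"
  have "norm (\<Sum>k\<in>UNIV. a k * u $ k) \<le> (\<Sum>k\<in>UNIV. norm (a k) * norm (u $ k))"
    by (rule order_trans[OF norm_sum]) (simp add: norm_mult)
  also have "\<dots> \<le> (\<Sum>k\<in>UNIV. norm (a k) * ((1 - (norm (z $ k))\<^sup>2) * B))"
    unfolding B_def
    by (intro sum_mono mult_left_mono norm_component_le_sqrt_bergman[OF assms(1)]) simp
  also have "\<dots> = (\<Sum>k\<in>UNIV. norm (a k) * (1 - (norm (z $ k))\<^sup>2)) * B"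
    by (simp add: sum_distrib_right mult.assoc)
  finally show ?thesis
    using bergman_pos[OF assms] by (simp add: B_def divide_le_eq)
qed

lemma nonzero_vectors_nonempty: "{u :: 'a::zero_neq_one ^ 'n::finite. u \<noteq> 0} \<noteq> {}"
  by (auto intro!: exI[of _ "axis undefined 1"])

lemma Qf_le_sum_pderiv_c:
  assumes "z \<in> polydisc"
  shows "Qf f z \<le> (\<Sum>k\<in>UNIV. norm (pderiv_c f k z) * (1 - (norm (z $ k))\<^sup>2))"
  unfolding Qf_def
  by (rule cSUP_least[OF nonzero_vectors_nonempty]) (use Qf_quotient_le[OF assms] in auto)

lemma Qf_quotient_le_Qf:
  assumes "z \<in> polydisc" "u \<noteq> 0"
  shows "norm (\<Sum>k\<in>UNIV. pderiv_c f k z * u $ k) / sqrt (bergman z u) \<le> Qf f z"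
  unfolding Qf_def
  by (rule cSUP_upper) (use assms Qf_quotient_le[OF assms(1)] in \<open>auto intro!: bdd_aboveI2\<close>)

lemma Qf_nonneg:
  assumes "z \<in> polydisc"
  shows "0 \<le> Qf f z"
proof -
  have "(axis undefined 1 :: complex ^ 'n) \<noteq> 0" by simp
  from Qf_quotient_le_Qf[OF assms this] show ?thesis
    by (rule order_trans[rotated]) (use bergman_pos[OF assms \<open>axis undefined 1 \<noteq> 0\<close>] in simp)
qed

lemma Qf_le_bloch_seminorm:
  assumes "f \<in> bloch" "z \<in> polydisc"
  shows "Qf f z \<le> bloch_seminorm f"
  unfolding bloch_seminorm_def by (rule cSUP_upper) (use assms in \<open>auto simp: bloch_def\<close>)

lemma bloch_seminorm_nonneg: "f \<in> bloch \<Longrightarrow> 0 \<le> bloch_seminorm f"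
  using Qf_nonneg Qf_le_bloch_seminorm zero_in_polydisc by (metis order_trans)

lemma bloch_norm_nonneg: "f \<in> bloch \<Longrightarrow> 0 \<le> bloch_norm f"
  by (simp add: bloch_norm_def bloch_seminorm_nonneg)

lemma bloch_directional_derivative_le:
  assumes "f \<in> bloch" "z \<in> polydisc"
  shows "norm (\<Sum>k\<in>UNIV. pderiv_c f k z * v $ k)
           \<le> bloch_seminorm f * (\<Sum>k\<in>UNIV. norm (v $ k) / (1 - (norm (z $ k))\<^sup>2))"
proof (cases "v = 0")
  case False
  have "norm (\<Sum>k\<in>UNIV. pderiv_c f k z * v $ k) / sqrt (bergman z v) \<le> bloch_seminorm f"
    using Qf_quotient_le_Qf[OF assms(2) False, of f] Qf_le_bloch_seminorm[OF assms] by linarith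
  then have "norm (\<Sum>k\<in>UNIV. pderiv_c f k z * v $ k) \<le> bloch_seminorm f * sqrt (bergman z v)"
    using bergman_pos[OF assms(2) False] by (simp add: divide_le_eq mult.commute)
  also have "\<dots> \<le> bloch_seminorm f * (\<Sum>k\<in>UNIV. norm (v $ k) / (1 - (norm (z $ k))\<^sup>2))"
    by (intro mult_left_mono sqrt_bergman_le_sum bloch_seminorm_nonneg assms)
  finally show ?thesis .
qed simp

lemma Qf_const: "Qf (\<lambda>z :: complex ^ 'n::finite. c) = (\<lambda>z. 0)"
proof
  fix z :: "complex ^ 'n"
  have "Qf (\<lambda>z. c) z = (SUP u\<in>{u :: complex ^ 'n. u \<noteq> 0}. 0)"
    unfolding Qf_def pderiv_c_def by simp
  also have "\<dots> = 0"
    by (rule cSUP_const[OF nonzero_vectors_nonempty])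
  finally show "Qf (\<lambda>z. c) z = 0" .
qed

lemma const_in_bloch0star: "(\<lambda>z. c) \<in> bloch0star"
  by (auto simp: bloch0star_def bloch_def holo_on_const Qf_const intro: bdd_aboveI[of _ 0])

section \<open>Growth of Bloch functions\<close>

lemma artanh_nonneg:
  fixes r :: real
  assumes "0 \<le> r" "r < 1"
  shows "0 \<le> artanh r"
proof -
  have "1 \<le> (1 + r) / (1 - r)" using assms by (simp add: le_divide_eq)
  then show ?thesis by (simp add: artanh_def)
qed

lemma has_real_derivative_sum_artanh:
  fixes r :: "'a \<Rightarrow> real"
  assumes "\<And>k. k \<in> K \<Longrightarrow> \<bar>t * r k\<bar> < 1"
  shows "((\<lambda>t. \<Sum>k\<in>K. artanh (t * r k)) has_real_derivative (\<Sum>k\<in>K. r k / (1 - (t * r k)\<^sup>2))) (at t)"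
proof (rule DERIV_sum)
  fix k assume "k \<in> K"
  have "((\<lambda>t. t * r k) has_real_derivative r k) (at t)"
    by (auto intro!: derivative_eq_intros)
  from DERIV_chain2[OF artanh_real_has_field_derivative[OF assms[OF \<open>k \<in> K\<close>]] this]
  show "((\<lambda>t. artanh (t * r k)) has_real_derivative r k / (1 - (t * r k)\<^sup>2)) (at t)"
    by simp
qed

lemma holo_on_has_vector_derivative_ray:
  assumes "holo_on f S" "t *\<^sub>R w \<in> S"
  shows "((\<lambda>t. f (t *\<^sub>R w)) has_vector_derivative (\<Sum>k\<in>UNIV. pderiv_c f k (t *\<^sub>R w) * w $ k)) (at t)"
proof -
  let ?D = "\<lambda>v. \<Sum>k\<in>UNIV. pderiv_c f k (t *\<^sub>R w) * v $ k"
  have D: "(f has_derivative ?D) (at (t *\<^sub>R w))"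
    by (rule holo_on_has_derivative[OF assms])
  have "((\<lambda>t. t *\<^sub>R w) has_derivative (\<lambda>s. s *\<^sub>R w)) (at t)"
    by (rule bounded_linear.has_derivative[OF bounded_linear_scaleR_left has_derivative_ident])
  from has_derivative_compose[OF this D]
  have "((\<lambda>t. f (t *\<^sub>R w)) has_derivative (\<lambda>s. ?D (s *\<^sub>R w))) (at t)" .
  moreover have "?D (s *\<^sub>R w) = s *\<^sub>R ?D w" for s
    by (rule linear.scaleR[OF bounded_linear.linear[OF has_derivative_bounded_linear[OF D]]])
  ultimately show ?thesis by (simp add: has_vector_derivative_def)
qed

lemma bloch_growth:
  assumes f: "f \<in> bloch" and w: "w \<in> polydisc"
  shows "norm (f w - f 0) \<le> bloch_seminorm f * (\<Sum>k\<in>UNIV. artanh (norm (w $ k)))"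
proof -
  define \<beta> where "\<beta> = bloch_seminorm f"
  define \<Phi> where "\<Phi> t = \<beta> * (\<Sum>k\<in>UNIV. artanh (t * norm (w $ k)))" for t
  define \<Phi>' where "\<Phi>' t = \<beta> * (\<Sum>k\<in>UNIV. norm (w $ k) / (1 - (t * norm (w $ k))\<^sup>2))" for t
  define D where "D t = (\<Sum>k\<in>UNIV. pderiv_c f k (t *\<^sub>R w) * w $ k)" for t
  have tw: "t *\<^sub>R w \<in> polydisc" if "t \<in> {0..1}" for t
    using scaleR_in_polydisc[OF w, of t] that by simp
  have f_deriv: "((\<lambda>t. f (t *\<^sub>R w)) has_vector_derivative D t) (at t)" if "t \<in> {0..1}" for t
    using holo_on_has_vector_derivative_ray[OF _ tw[OF that]] f unfolding D_def bloch_def by blast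
  have \<Phi>_deriv: "(\<Phi> has_vector_derivative \<Phi>' t) (at t)" if "t \<in> {0..1}" for t
  proof -
    have "\<bar>t * norm (w $ k)\<bar> < 1" for k
      using polydisc_norm_less_1[OF tw[OF that], of k] that by simp
    then have "(\<Phi> has_real_derivative \<Phi>' t) (at t)"
      unfolding \<Phi>_def[abs_def] \<Phi>'_def by (intro DERIV_cmult has_real_derivative_sum_artanh)
    then show ?thesis by (simp add: has_real_derivative_iff_has_vector_derivative)
  qed
  have D_le: "norm (D t) \<le> \<Phi>' t" if "t \<in> {0..1}" for t
  proof -
    have "\<bar>t\<bar> = t" using that by simp
    then show ?thesis
      using bloch_directional_derivative_le[OF f tw[OF that], of w]
      by (simp add: D_def \<Phi>'_def \<beta>_def)
  qed
  have "continuous_on {0..1} (\<lambda>t. f (t *\<^sub>R w))"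
    using f_deriv has_vector_derivative_continuous by (blast intro: continuous_at_imp_continuous_on)
  moreover have "continuous_on {0..1} \<Phi>"
    using \<Phi>_deriv has_vector_derivative_continuous by (blast intro: continuous_at_imp_continuous_on)
  ultimately
  have "norm (f (1 *\<^sub>R w) - f (0 *\<^sub>R w)) \<le> \<Phi> 1 - \<Phi> 0"
    by (rule differentiable_bound_general[OF zero_less_one _ _ f_deriv \<Phi>_deriv D_le]) auto
  then show ?thesis by (simp add: \<Phi>_def \<beta>_def)
qed

lemma bloch_pointwise_le:
  assumes "f \<in> bloch" "w \<in> polydisc"
  shows "norm (f w) \<le> bloch_norm f * (1 + (\<Sum>k\<in>UNIV. artanh (norm (w $ k))))"
proof -
  define S where "S = (\<Sum>k\<in>UNIV. artanh (norm (w $ k)))"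
  have S: "0 \<le> S"
    unfolding S_def using polydisc_norm_less_1[OF assms(2)] by (intro sum_nonneg artanh_nonneg) auto
  have "norm (f w) \<le> norm (f 0) + bloch_seminorm f * S"
    using bloch_growth[OF assms] norm_triangle_ineq2[of "f w" "f 0"] unfolding S_def by linarith
  also have "\<dots> \<le> bloch_norm f * (1 + S)"
    using S bloch_seminorm_nonneg[OF assms(1)]
    by (simp add: bloch_norm_def algebra_simps mult_left_le)
  finally show ?thesis by (simp add: S_def)
qed

section \<open>The logarithmic test functions\<close>

text \<open>\<open>ln\<close> is the principal logarithm; it is holomorphic at \<open>1 - c\<^sub>j z\<^sub>j\<close> because that
  point has positive real part when \<open>c, z \<in> \<bbbD>\<^sup>n\<close>.\<close>

definition log_kernel :: "complex ^ 'n::finite \<Rightarrow> complex ^ 'n \<Rightarrow> complex" where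
  "log_kernel c z = (\<Sum>j\<in>UNIV. - ln (1 - c $ j * z $ j))"

lemma norm_one_minus_mult_ge:
  fixes a w :: complex
  shows "1 - norm a * norm w \<le> norm (1 - a * w)"
  using norm_triangle_ineq2[of 1 "a * w"] by (simp add: norm_mult)

lemma has_field_derivative_neg_ln_one_minus_mult:
  fixes a w :: complex
  assumes "norm a < 1" "norm w < 1"
  shows "((\<lambda>w. - ln (1 - a * w)) has_field_derivative a / (1 - a * w)) (at w)"
proof -
  have "norm a * norm w < 1"
    using assms mult_strict_mono[of "norm a" 1 "norm w" 1] by simp
  then have "Re (1 - a * w) > 0"
    using complex_Re_le_cmod[of "a * w"] by (simp add: norm_mult)
  then have "1 - a * w \<notin> \<real>\<^sub>\<le>\<^sub>0"
    by (auto simp: complex_nonpos_Reals_iff)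
  moreover from this have "1 - a * w \<noteq> 0"
    by auto
  ultimately show ?thesis
    by (auto intro!: derivative_eq_intros simp: field_simps)
qed

lemma log_kernel_has_derivative:
  assumes "c \<in> polydisc" "z \<in> polydisc"
  shows "(log_kernel c has_derivative (\<lambda>h. \<Sum>j\<in>UNIV. c $ j / (1 - c $ j * z $ j) * h $ j)) (at z)"
  unfolding log_kernel_def
proof (rule has_derivative_sum)
  fix j
  have "((\<lambda>w. - ln (1 - c $ j * w)) has_field_derivative c $ j / (1 - c $ j * z $ j)) (at (z $ j))"
    by (intro has_field_derivative_neg_ln_one_minus_mult polydisc_norm_less_1 assms)
  then have "((\<lambda>w. - ln (1 - c $ j * w)) has_derivative (\<lambda>h. c $ j / (1 - c $ j * z $ j) * h)) (at (z $ j))"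
    by (simp only: has_field_derivative_def)
  from has_derivative_compose[OF bounded_linear.has_derivative[OF bounded_linear_vec_nth has_derivative_ident] this]
  show "((\<lambda>z. - ln (1 - c $ j * z $ j)) has_derivative (\<lambda>h. c $ j / (1 - c $ j * z $ j) * h $ j)) (at z)" .
qed

lemma holo_on_log_kernel:
  fixes c :: "complex ^ 'n::finite"
  assumes "c \<in> polydisc"
  shows "holo_on (log_kernel c) polydisc"
  unfolding holo_on_def
proof
  fix z :: "complex ^ 'n" assume "z \<in> polydisc"
  with assms show "\<exists>f'. (log_kernel c has_derivative f') (at z) \<and> (\<forall>v. f' (cscale \<i> v) = \<i> * f' v)"
    by (intro exI[of _ "\<lambda>h. \<Sum>j\<in>UNIV. c $ j / (1 - c $ j * z $ j) * h $ j"] conjI allI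
        log_kernel_has_derivative)
       (simp_all add: cscale_def sum_distrib_left mult.left_commute)
qed

lemma pderiv_c_log_kernel:
  assumes "c \<in> polydisc" "z \<in> polydisc"
  shows "pderiv_c (log_kernel c) k z = c $ k / (1 - c $ k * z $ k)"
proof -
  have "pderiv_c (log_kernel c) k z = (\<Sum>j\<in>UNIV. c $ j / (1 - c $ j * z $ j) * axis k 1 $ j)"
    by (rule pderiv_c_eq[OF log_kernel_has_derivative[OF assms]])
       (simp add: cscale_def sum_distrib_left mult.left_commute)
  also have "\<dots> = c $ k / (1 - c $ k * z $ k)"
    by (simp add: axis_def if_distrib[of "\<lambda>t. _ * t"] cong: if_cong)
  finally show ?thesis .
qed

lemma log_kernel_deriv_weighted_le:
  fixes a w :: complex
  assumes "norm a < 1" "norm w < 1"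
  shows "norm (a / (1 - a * w)) * (1 - (norm w)\<^sup>2) \<le> (1 - (norm w)\<^sup>2) / (1 - norm a)"
    and "norm (a / (1 - a * w)) * (1 - (norm w)\<^sup>2) \<le> 2"
proof -
  define m where "m = 1 - norm a * norm w"
  have "norm a * norm w \<le> norm a" "norm a * norm w \<le> norm w"
    using assms by (auto intro: mult_left_le mult_left_le_one_le)
  then have m_ge: "1 - norm a \<le> m" "1 - norm w \<le> m"
    unfolding m_def by linarith+
  have m_pos: "0 < m" using m_ge(1) assms(1) by linarith
  have "norm (a / (1 - a * w)) \<le> 1 / m"
  proof -
    have "norm (a / (1 - a * w)) \<le> 1 / norm (1 - a * w)"
      using assms(1) by (simp add: norm_divide divide_right_mono)
    also have "\<dots> \<le> 1 / m"
      by (rule frac_le) (use m_pos norm_one_minus_mult_ge[of a w] in \<open>auto simp: m_def\<close>)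
    finally show ?thesis .
  qed
  moreover have w2: "0 \<le> 1 - (norm w)\<^sup>2"
    using assms(2) by (simp add: abs_square_le_1)
  ultimately have bound: "norm (a / (1 - a * w)) * (1 - (norm w)\<^sup>2) \<le> (1 - (norm w)\<^sup>2) / m"
    using mult_right_mono by fastforce
  also have "\<dots> \<le> (1 - (norm w)\<^sup>2) / (1 - norm a)"
    using m_ge(1) assms(1) w2 by (intro divide_left_mono) auto
  finally show "norm (a / (1 - a * w)) * (1 - (norm w)\<^sup>2) \<le> (1 - (norm w)\<^sup>2) / (1 - norm a)" .
  have "(1 - (norm w)\<^sup>2) / m \<le> (1 - (norm w)\<^sup>2) / (1 - norm w)"
    using m_ge(2) assms(2) w2 by (intro divide_left_mono) auto
  also have "\<dots> = 1 + norm w"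
    using assms(2) by (simp add: field_simps power2_eq_square)
  finally show "norm (a / (1 - a * w)) * (1 - (norm w)\<^sup>2) \<le> 2"
    using bound assms(2) by linarith
qed

lemma Qf_log_kernel_le_boundary_decay:
  assumes "c \<in> polydisc" "z \<in> polydisc"
  shows "Qf (log_kernel c) z \<le> (\<Sum>k\<in>UNIV. (1 - (norm (z $ k))\<^sup>2) / (1 - norm (c $ k)))"
  using Qf_le_sum_pderiv_c[OF assms(2)]
  by (rule order_trans)
     (auto intro!: sum_mono log_kernel_deriv_weighted_le(1) polydisc_norm_less_1 assms
       simp: pderiv_c_log_kernel[OF assms])

lemma Qf_log_kernel_le:
  fixes c :: "complex ^ 'n::finite"
  assumes "c \<in> polydisc" "z \<in> polydisc"
  shows "Qf (log_kernel c) z \<le> 2 * real CARD('n)"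
proof -
  have "(\<Sum>k\<in>UNIV. norm (pderiv_c (log_kernel c) k z) * (1 - (norm (z $ k))\<^sup>2)) \<le> (\<Sum>k\<in>(UNIV :: 'n set). 2)"
    by (intro sum_mono)
       (simp add: pderiv_c_log_kernel[OF assms] log_kernel_deriv_weighted_le(2) polydisc_norm_less_1 assms)
  then show ?thesis
    using Qf_le_sum_pderiv_c[OF assms(2), of "log_kernel c"] by simp
qed

lemma log_kernel_in_bloch0star:
  fixes c :: "complex ^ 'n::finite"
  assumes c: "c \<in> polydisc"
  shows "log_kernel c \<in> bloch0star"
  unfolding bloch0star_def bloch_def
proof (intro CollectI conjI ballI holo_on_log_kernel c)
  show "bdd_above (Qf (log_kernel c) ` polydisc)"
    using Qf_log_kernel_le[OF c] by (rule bdd_aboveI2)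
  fix \<zeta> :: "complex ^ 'n" assume "\<zeta> \<in> torus"
  define B where "B z = (\<Sum>k\<in>UNIV. (1 - (norm (z $ k))\<^sup>2) / (1 - norm (c $ k)))" for z :: "complex ^ 'n"
  have "1 - norm (c $ k) \<noteq> 0" for k
    using polydisc_norm_less_1[OF c, of k] by simp
  then have "(B \<longlongrightarrow> B \<zeta>) (at \<zeta> within polydisc)"
    unfolding B_def by (intro tendsto_intros) auto
  moreover have "B \<zeta> = 0" using \<open>\<zeta> \<in> torus\<close> by (simp add: B_def torus_def)
  ultimately have "(B \<longlongrightarrow> 0) (at \<zeta> within polydisc)" by simp
  moreover have "\<forall>\<^sub>F z in at \<zeta> within polydisc. 0 \<le> Qf (log_kernel c) z \<and> Qf (log_kernel c) z \<le> B z"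
    unfolding eventually_at_filter
    by (rule always_eventually) (use Qf_nonneg Qf_log_kernel_le_boundary_decay[OF c] in \<open>auto simp: B_def\<close>)
  ultimately show "(Qf (log_kernel c) \<longlongrightarrow> 0) (at \<zeta> within polydisc)"
    by (auto intro: tendsto_sandwich[OF _ _ tendsto_const] elim: eventually_mono)
qed

lemma bloch_norm_log_kernel_le:
  fixes c :: "complex ^ 'n::finite"
  assumes "c \<in> polydisc"
  shows "bloch_norm (log_kernel c) \<le> 2 * real CARD('n)"
proof -
  have "bloch_seminorm (log_kernel c) \<le> 2 * real CARD('n)"
    unfolding bloch_seminorm_def
    using zero_in_polydisc Qf_log_kernel_le[OF assms] by (auto intro: cSUP_least)
  then show ?thesis by (simp add: bloch_norm_def log_kernel_def)
qed

lemma norm_log_kernel_cnj: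
  assumes "w \<in> polydisc"
  shows "norm (log_kernel (\<chi> j. cnj (w $ j)) w) = (\<Sum>j\<in>UNIV. - ln (1 - (norm (w $ j))\<^sup>2))"
proof -
  have pos: "0 < 1 - (norm (w $ j))\<^sup>2" for j
    using polydisc_norm_less_1[OF assms] by (simp add: abs_square_less_1)
  have "- ln (1 - cnj (w $ j) * w $ j) = of_real (- ln (1 - (norm (w $ j))\<^sup>2))" for j
  proof -
    have "1 - cnj (w $ j) * w $ j = of_real (1 - (norm (w $ j))\<^sup>2)"
      by (metis complex_norm_square mult.commute of_real_1 of_real_diff)
    then show ?thesis by (simp only: Ln_of_real[OF pos] of_real_minus)
  qed
  then have "log_kernel (\<chi> j. cnj (w $ j)) w = of_real (\<Sum>j\<in>UNIV. - ln (1 - (norm (w $ j))\<^sup>2))"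
    by (simp add: log_kernel_def)
  moreover have "0 \<le> (\<Sum>j\<in>UNIV. - ln (1 - (norm (w $ j))\<^sup>2))"
    using pos by (intro sum_nonneg) simp
  ultimately show ?thesis by (simp only: norm_of_real abs_of_nonneg)
qed

section \<open>Weighted composition operators\<close>

lemma artanh_le_ln2_minus_half_ln:
  fixes r :: real
  assumes "\<bar>r\<bar> < 1"
  shows "artanh r \<le> ln 2 - ln (1 - r\<^sup>2) / 2"
proof -
  have pos: "0 < 1 - r" "0 < 1 + r" "0 < 1 - r\<^sup>2" using assms by (auto simp: abs_square_less_1)
  have "(1 + r) / (1 - r) = (1 + r)\<^sup>2 / (1 - r\<^sup>2)"
    using pos by (simp add: field_simps power2_eq_square)
  then have "artanh r = (ln ((1 + r)\<^sup>2) - ln (1 - r\<^sup>2)) / 2"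
    using pos assms by (simp add: artanh_def ln_div)
  also have "\<dots> \<le> (ln (2\<^sup>2) - ln (1 - r\<^sup>2)) / 2"
  proof -
    have "(1 + r)\<^sup>2 \<le> 2\<^sup>2" using assms by (intro power_mono) auto
    then have "ln ((1 + r)\<^sup>2) \<le> ln (2\<^sup>2)" using assms by (subst ln_le_cancel_iff) auto
    then show ?thesis by simp
  qed
  also have "\<dots> = ln 2 - ln (1 - r\<^sup>2) / 2"
    using ln_realpow[of "2::real" 2] by simp
  finally show ?thesis .
qed

lemma sum_artanh_le:
  fixes w :: "complex ^ 'n::finite"
  assumes "w \<in> polydisc"
  shows "(\<Sum>j\<in>UNIV. artanh (norm (w $ j)))
           \<le> CARD('n) * ln 2 + (\<Sum>j\<in>UNIV. - ln (1 - (norm (w $ j))\<^sup>2)) / 2"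
proof -
  have "(\<Sum>j\<in>UNIV. artanh (norm (w $ j))) \<le> (\<Sum>j\<in>UNIV. ln 2 - ln (1 - (norm (w $ j))\<^sup>2) / 2)"
    using polydisc_norm_less_1[OF assms] by (intro sum_mono artanh_le_ln2_minus_half_ln) auto
  also have "\<dots> = CARD('n) * ln 2 + (\<Sum>j\<in>UNIV. - ln (1 - (norm (w $ j))\<^sup>2)) / 2"
    by (simp add: sum_subtractf sum_divide_distrib[symmetric] sum_negf)
  finally show ?thesis .
qed

lemma weighted_sum_artanh_le:
  fixes w :: "complex ^ 'n::finite"
  assumes "w \<in> polydisc" "0 \<le> a" "a \<le> M"
    and "a * (\<Sum>j\<in>UNIV. - ln (1 - (norm (w $ j))\<^sup>2)) \<le> 2 * K"
  shows "a * (\<Sum>j\<in>UNIV. artanh (norm (w $ j))) \<le> M * CARD('n) * ln 2 + K"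
proof -
  have "a * (\<Sum>j\<in>UNIV. artanh (norm (w $ j)))
        \<le> a * (CARD('n) * ln 2 + (\<Sum>j\<in>UNIV. - ln (1 - (norm (w $ j))\<^sup>2)) / 2)"
    using sum_artanh_le[OF assms(1)] assms(2) by (rule mult_left_mono)
  also have "\<dots> = a * CARD('n) * ln 2 + a * (\<Sum>j\<in>UNIV. - ln (1 - (norm (w $ j))\<^sup>2)) / 2"
    by (simp add: algebra_simps)
  also have "\<dots> \<le> M * CARD('n) * ln 2 + K"
  proof -
    have "a * CARD('n) * ln 2 \<le> M * CARD('n) * ln 2"
      using assms(3) by (intro mult_right_mono) auto
    then show ?thesis using assms(4) by linarith
  qed
  finally show ?thesis .
qed

lemma bloch0star_subset_bloch: "bloch0star \<subseteq> bloch"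
  by (auto simp: bloch0star_def)

lemma bounded_op_subset:
  "bounded_op T X nX Y nY \<Longrightarrow> X' \<subseteq> X \<Longrightarrow> bounded_op T X' nX Y nY"
  unfolding bounded_op_def by blast

lemma Hmu_norm_ge: "f \<in> Hmu mu \<Longrightarrow> z \<in> polydisc \<Longrightarrow> mu z * norm (f z) \<le> Hmu_norm mu f"
  unfolding Hmu_def Hmu_norm_def by (auto intro: cSUP_upper)

lemma Hmu_norm_le: "(\<And>z. z \<in> polydisc \<Longrightarrow> mu z * norm (f z) \<le> B) \<Longrightarrow> Hmu_norm mu f \<le> B"
  unfolding Hmu_norm_def using zero_in_polydisc by (auto intro: cSUP_least)

lemma bounded_op_HmuE:
  assumes "bounded_op T X nX (Hmu mu) (Hmu_norm mu)" "\<And>x. x \<in> X \<Longrightarrow> 0 \<le> nX x"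
  obtains C where "0 \<le> C" "\<And>x z. x \<in> X \<Longrightarrow> z \<in> polydisc \<Longrightarrow> mu z * norm (T x z) \<le> C * nX x"
proof -
  obtain C where C: "\<And>x. x \<in> X \<Longrightarrow> T x \<in> Hmu mu \<and> Hmu_norm mu (T x) \<le> C * nX x"
    using assms(1) unfolding bounded_op_def by blast
  have "mu z * norm (T x z) \<le> \<bar>C\<bar> * nX x" if "x \<in> X" "z \<in> polydisc" for x z
  proof -
    have "mu z * norm (T x z) \<le> Hmu_norm mu (T x)"
      using C[OF that(1)] that(2) by (intro Hmu_norm_ge) auto
    also have "\<dots> \<le> C * nX x"
      using C[OF that(1)] by simp
    also have "\<dots> \<le> \<bar>C\<bar> * nX x"
      using assms(2)[OF that(1)] by (intro mult_right_mono) auto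
    finally show ?thesis .
  qed
  then show ?thesis using that[of "\<bar>C\<bar>"] by simp
qed

lemma theta_set_eq_artanh:
  "theta_set mu psi phi = (\<lambda>z. mu z * norm (psi z) * (\<Sum>j\<in>UNIV. artanh (norm (phi z $ j)))) ` polydisc"
  by (simp add: theta_set_def artanh_def sum_divide_distrib[symmetric])

lemma norm_wcomp_le:
  assumes "f \<in> bloch" "holo_self_map phi" "z \<in> polydisc" "0 \<le> mu z"
  shows "mu z * norm (wcomp psi phi f z)
           \<le> (mu z * norm (psi z) + mu z * norm (psi z) * (\<Sum>j\<in>UNIV. artanh (norm (phi z $ j))))
              * bloch_norm f"
proof -
  have "mu z * norm (wcomp psi phi f z) = mu z * norm (psi z) * norm (f (phi z))"
    by (simp add: wcomp_def norm_mult)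
  also have "\<dots> \<le> mu z * norm (psi z) * (bloch_norm f * (1 + (\<Sum>j\<in>UNIV. artanh (norm (phi z $ j)))))"
    using assms bloch_pointwise_le[OF assms(1) self_map_in_polydisc[OF assms(2,3)]]
    by (intro mult_left_mono) auto
  finally show ?thesis by (simp add: algebra_simps)
qed

lemma bounded_op_wcomp_bloch_if_bdd_theta:
  fixes phi :: "complex ^ 'n::finite \<Rightarrow> complex ^ 'n"
  assumes mu_nonneg: "\<forall>z\<in>polydisc. 0 \<le> mu z"
    and psi: "holo_on psi polydisc" and phi: "holo_self_map phi"
    and psi_Hmu: "psi \<in> Hmu mu" and theta: "bdd_above (theta_set mu psi phi)"
  shows "bounded_op (wcomp psi phi) bloch bloch_norm (Hmu mu) (Hmu_norm mu)"
proof -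
  obtain M where M: "\<And>z. z \<in> polydisc \<Longrightarrow> mu z * norm (psi z) \<le> M"
    using psi_Hmu unfolding Hmu_def bdd_above_def by auto
  obtain \<Theta> where \<Theta>: "\<And>z. z \<in> polydisc \<Longrightarrow>
      mu z * norm (psi z) * (\<Sum>j\<in>UNIV. artanh (norm (phi z $ j))) \<le> \<Theta>"
    using theta unfolding theta_set_eq_artanh bdd_above_def by auto
  have pointwise: "mu z * norm (wcomp psi phi f z) \<le> (M + \<Theta>) * bloch_norm f"
    if f: "f \<in> bloch" and z: "z \<in> polydisc" for f z
  proof -
    have "mu z * norm (wcomp psi phi f z)
          \<le> (mu z * norm (psi z) + mu z * norm (psi z) * (\<Sum>j\<in>UNIV. artanh (norm (phi z $ j))))
             * bloch_norm f"
      using mu_nonneg z by (intro norm_wcomp_le f phi) auto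
    also have "\<dots> \<le> (M + \<Theta>) * bloch_norm f"
      using M[OF z] \<Theta>[OF z] bloch_norm_nonneg[OF f] by (intro mult_right_mono add_mono)
    finally show ?thesis .
  qed
  show ?thesis
    unfolding bounded_op_def
  proof (intro conjI ballI exI)
    fix f :: "complex ^ 'n \<Rightarrow> complex" assume f: "f \<in> bloch"
    then have "holo_on (wcomp psi phi f) polydisc"
      by (intro holo_on_wcomp psi phi) (simp add: bloch_def)
    moreover have "bdd_above ((\<lambda>z. mu z * norm (wcomp psi phi f z)) ` polydisc)"
      using pointwise[OF f] by (rule bdd_aboveI2)
    ultimately show "wcomp psi phi f \<in> Hmu mu"
      by (simp add: Hmu_def)
    show "Hmu_norm mu (wcomp psi phi f) \<le> (M + \<Theta>) * bloch_norm f"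
      using pointwise[OF f] by (rule Hmu_norm_le)
  qed
qed

lemma bdd_theta_if_bounded_op_wcomp_bloch0star:
  fixes phi :: "complex ^ 'n::finite \<Rightarrow> complex ^ 'n"
  assumes mu_nonneg: "\<forall>z\<in>polydisc. 0 \<le> mu z" and phi: "holo_self_map phi"
    and bounded: "bounded_op (wcomp psi phi) bloch0star bloch_norm (Hmu mu) (Hmu_norm mu)"
  shows "psi \<in> Hmu mu \<and> bdd_above (theta_set mu psi phi)"
proof -
  have "wcomp psi phi (\<lambda>z. 1) = psi" by (simp add: wcomp_def)
  then have psi_Hmu: "psi \<in> Hmu mu"
    using bounded const_in_bloch0star[of 1] unfolding bounded_op_def by metis
  then obtain M where M: "\<And>z. z \<in> polydisc \<Longrightarrow> mu z * norm (psi z) \<le> M"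
    unfolding Hmu_def bdd_above_def by auto
  obtain C where "0 \<le> C" and C: "\<And>f z. f \<in> bloch0star \<Longrightarrow> z \<in> polydisc \<Longrightarrow>
      mu z * norm (wcomp psi phi f z) \<le> C * bloch_norm f"
    using bounded_op_HmuE[OF bounded] bloch_norm_nonneg bloch0star_subset_bloch by blast
  define n where "n = real CARD('n)"
  have "mu z * norm (psi z) * (\<Sum>j\<in>UNIV. artanh (norm (phi z $ j))) \<le> M * n * ln 2 + C * n"
    if z: "z \<in> polydisc" for z
  proof -
    have w: "phi z \<in> polydisc" using phi z by (rule self_map_in_polydisc)
    then have c: "(\<chi> j. cnj (phi z $ j)) \<in> polydisc" by (simp add: polydisc_def)
    have "mu z * norm (psi z) * (\<Sum>j\<in>UNIV. - ln (1 - (norm (phi z $ j))\<^sup>2))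
          = mu z * norm (wcomp psi phi (log_kernel (\<chi> j. cnj (phi z $ j))) z)"
      using norm_log_kernel_cnj[OF w] by (simp add: wcomp_def norm_mult)
    also have "\<dots> \<le> C * (2 * n)"
      using C[OF log_kernel_in_bloch0star[OF c] z] bloch_norm_log_kernel_le[OF c] \<open>0 \<le> C\<close>
      unfolding n_def by (meson mult_left_mono order_trans)
    also have "\<dots> = 2 * (C * n)"
      by simp
    finally show ?thesis
      unfolding n_def using mu_nonneg z by (intro weighted_sum_artanh_le[OF w _ M[OF z]]) auto
  qed
  then have "bdd_above (theta_set mu psi phi)"
    unfolding theta_set_eq_artanh by (rule bdd_aboveI2)
  with psi_Hmu show ?thesis ..
qed

theorem theorem5p1:
  fixes mu :: "complex ^ 'n::finite \<Rightarrow> real"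
    and psi :: "complex ^ 'n \<Rightarrow> complex"
    and phi :: "complex ^ 'n \<Rightarrow> complex ^ 'n"
  assumes "weight mu"
    and "holo_on psi polydisc"
    and "holo_self_map phi"
  shows "(bounded_op (wcomp psi phi) bloch bloch_norm (Hmu mu) (Hmu_norm mu)
            \<longleftrightarrow> bounded_op (wcomp psi phi) bloch0star bloch_norm (Hmu mu) (Hmu_norm mu))
       \<and> (bounded_op (wcomp psi phi) bloch0star bloch_norm (Hmu mu) (Hmu_norm mu)
            \<longleftrightarrow> (psi \<in> Hmu mu \<and> bdd_above (theta_set mu psi phi)))"
proof -
  have mu_nonneg: "\<forall>z\<in>polydisc. 0 \<le> mu z"
    using assms(1) by (auto simp: weight_def less_imp_le)
  show ?thesis
    using bounded_op_subset[OF _ bloch0star_subset_bloch, of "wcomp psi phi" bloch_norm "Hmu mu" "Hmu_norm mu"]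
      bdd_theta_if_bounded_op_wcomp_bloch0star[where psi = psi, OF mu_nonneg assms(3)]
      bounded_op_wcomp_bloch_if_bdd_theta[OF mu_nonneg assms(2,3)]
    by auto
qed

end
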